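(* Let $(\Delta,\mathfrak o,m,q)$ be a quantized Brauer graph. Then there exist a finite abelian group $G$ and a Brauer weighting $W:\mathcal Z_\Delta\to G$ of $(\Delta,\mathfrak o,m,q)$ such that the graph $\Delta_W$ of the quantized Brauer covering graph $(\Delta_W,\mathfrak o_W,m_W,q_W)$ contains no loops.
   Context: Brauer graphs. A Brauer graph $(\Delta,\mathfrak o,m)$ is a finite connected graph $\Delta$ (loops and multiple edges allowed) with vertex set $\Delta_0$, edge set $\Delta_1$ and at least one edge, together with a multiplicity function $m:\Delta_0\to\mathbb Z_{\ge 1}$ and, for each vertex $\mu$, a cyclic ordering $\mathfrak o$ of the edges incident with $\mu$. A loop at $\mu$ occurs twice in the cyclic ordering at $\mu$; its two occurrences are regarded as two distinct elements of $\Delta_1$ (each with its own successor). Edge $j$ is the successor of edge $i$ at $\mu$ if $j$ immediately follows $i$ in the cyclic ordering at $\mu$. The valency $\operatorname{val}(\mu)$ is the number of edges incident with $\mu$, loops counted twice; if $\operatorname{val}(\mu)=1$ the unique edge at $\mu$ is its own successor. An edge $i$ is truncated at its endpoint $\mu$ if $\operatorname{val}(\mu)=1$ and $m(\mu)=1$. Fix a field $K$. A quantized Brauer graph $(\Delta,\mathfrak o,m,q)$ is a Brauer graph with a function $q:\mathcal X_\Delta\to K\setminus\{0\}$, $(i,\mu)\mapsto q_{i,\mu}$, where $\mathcal X_\Delta$ is the set of pairs $(i,\mu)$ with $\mu$ an endpoint of $i$ and $i$ not truncated at either of its endpoints. Successor weightings. Let $G$ be a finite abelian group. For $\mu\in\Delta_0$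 let $\mathcal Z_\mu$ be the set of pairs $(i,j)$ of edges with $j$ the successor of $i$ at $\mu$, and $\mathcal Z_\Delta=\bigsqcup_{\mu\in\Delta_0}\mathcal Z_\mu$ (disjoint union). A successor weighting is a function $W:\mathcal Z_\Delta\to G$. Put $\omega_\mu=\prod_{(i,j)\in\mathcal Z_\mu}W(i,j)$, let $\operatorname{ord}(\mu)$ be the order of $\omega_\mu$ in $G$, and $H_\mu=\langle\omega_\mu\rangle$. $W$ is a Brauer weighting if $\operatorname{ord}(\mu)$ divides $m(\mu)$ for all $\mu\in\Delta_0$. For each $\mu$, $\sim$ is the equivalence relation on the set of pairs $(i,H_\mu g)$ ($i$ incident with $\mu$, $g\in G$) generated by $(i,H_\mu g)\sim(j,H_\mu gW(i,j))$ whenever $j$ is the successor of $i$ at $\mu$; the class of $(i,H_\mu g)$ is $[i,H_\mu g]$, and $\mathcal D_\mu$ is the set of classes. Brauer covering graph. The graph $\Delta_W$ has vertices $\mu_d$ ($\mu\in\Delta_0$, $d\in\mathcal D_\mu$) and edges $i_g$ ($i\in\Delta_1$, $g\in G$). If $i$ has endpoints $\mu$ and $\nu$, then $i_g$ has endpoints $\mu_{[i,H_\mu g]}$ and $\nu_{[i,H_\nu g]}$; if $i$ is a loop at $\mu$ with its two occurrences $i,\hat i$, then $i_g$ has endpoints $\mu_{[i,H_\mu g]}$ and $\mu_{[\hat i,H_\mu g]}$. The cyclic ordering $\mathfrak o_W$ is defined by: if $j$ is the successor of $i$ at $\mu$, then $j_{gW(i,j)}$ is the successor of $i_g$ at $\mu_{[i,H_\mu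 g]}$. For a Brauer weighting, $m_W(\mu_d)=m(\mu)/\operatorname{ord}(\mu)$; $(\Delta_W,\mathfrak o_W,m_W)$ is the Brauer covering graph. Given a quantizing function $q$ on $\Delta$, $q_W(i_g,\mu_d)=q_{i,\mu}$, and $(\Delta_W,\mathfrak o_W,m_W,q_W)$ is the quantized Brauer covering graph. *)

theory Defs
  imports "HOL-Algebra.Algebra"
begin

(* E : edges; V : vertices; every edge i has two occurrences (half-edges)
   (i,False) and (i,True); vx h is the vertex at which occurrence h sits
   (for a non-loop edge the two endpoints, for a loop both equal mu, the
   two occurrences being i and \<hat>i).  sc h is the successor of occurrence
   h in the cyclic ordering at vx h. *)

definition halves :: "'e set \<Rightarrow> ('e \<times> bool) set" where
  "halves E = E \<times> (UNIV :: bool set)"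

definition halves_at :: "'e set \<Rightarrow> ('e \<times> bool \<Rightarrow> 'v) \<Rightarrow> 'v \<Rightarrow> ('e \<times> bool) set" where
  "halves_at E vx \<mu> = {h \<in> halves E. vx h = \<mu>}"

definition valency :: "'e set \<Rightarrow> ('e \<times> bool \<Rightarrow> 'v) \<Rightarrow> 'v \<Rightarrow> nat" where
  "valency E vx \<mu> = card (halves_at E vx \<mu>)"

definition brauer_graph ::
  "'v set \<Rightarrow> 'e set \<Rightarrow> ('e \<times> bool \<Rightarrow> 'v) \<Rightarrow> ('e \<times> bool \<Rightarrow> 'e \<times> bool) \<Rightarrow> ('v \<Rightarrow> nat) \<Rightarrow> bool" where
  "brauer_graph V E vx sc m \<longleftrightarrow>
     finite V \<and> finite E \<and> E \<noteq> {} \<and>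
     vx ` halves E \<subseteq> V \<and>
     \<comment> \<open>connectedness\<close>
     (\<forall>\<mu>\<in>V. \<forall>\<nu>\<in>V. (\<mu>, \<nu>) \<in>
        ({(vx (i, False), vx (i, True)) | i. i \<in> E} \<union>
         {(vx (i, True), vx (i, False)) | i. i \<in> E})\<^sup>*) \<and>
     \<comment> \<open>multiplicity\<close>
     (\<forall>\<mu>\<in>V. m \<mu> \<ge> 1) \<and>
     \<comment> \<open>cyclic orderings: sc permutes occurrences, preserves vertices,
         and the occurrences at each vertex form a single cycle\<close>
     bij_betw sc (halves E) (halves E) \<and>
     (\<forall>h\<in>halves E. vx (sc h) = vx h) \<and>
     (\<forall>h\<in>halves E. \<forall>h'\<in>halves E. vx h = vx h' \<longrightarrow> (\<exists>n. (sc ^^ n) h = h'))"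

definition truncated_at ::
  "'e set \<Rightarrow> ('e \<times> bool \<Rightarrow> 'v) \<Rightarrow> ('v \<Rightarrow> nat) \<Rightarrow> 'v \<Rightarrow> bool" where
  "truncated_at E vx m \<mu> \<longleftrightarrow> valency E vx \<mu> = 1 \<and> m \<mu> = 1"

definition X_set :: "'e set \<Rightarrow> ('e \<times> bool \<Rightarrow> 'v) \<Rightarrow> ('v \<Rightarrow> nat) \<Rightarrow> ('e \<times> 'v) set" where
  "X_set E vx m = {(i, \<mu>). i \<in> E \<and> (\<mu> = vx (i, False) \<or> \<mu> = vx (i, True)) \<and>
      \<not> truncated_at E vx m (vx (i, False)) \<and> \<not> truncated_at E vx m (vx (i, True))}"

definition quantized_brauer_graph ::
  "'v set \<Rightarrow> 'e set \<Rightarrow> ('e \<times> bool \<Rightarrow> 'v) \<Rightarrow> ('e \<times> bool \<Rightarrow> 'e \<times> bool) \<Rightarrow> ('v \<Rightarrow> nat)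
   \<Rightarrow> ('e \<Rightarrow> 'v \<Rightarrow> 'k::field) \<Rightarrow> bool" where
  "quantized_brauer_graph V E vx sc m q \<longleftrightarrow>
     brauer_graph V E vx sc m \<and> (\<forall>(i, \<mu>) \<in> X_set E vx m. q i \<mu> \<noteq> 0)"

(* Successor weightings: Z_mu is in bijection with the occurrences h at mu
   via h \<mapsto> (h, sc h), so W is given as a function on occurrences. *)

definition successor_weighting ::
  "('g, 'b) monoid_scheme \<Rightarrow> 'e set \<Rightarrow> ('e \<times> bool \<Rightarrow> 'g) \<Rightarrow> bool" where
  "successor_weighting G E W \<longleftrightarrow> (\<forall>h\<in>halves E. W h \<in> carrier G)"

definition omega ::
  "('g, 'b) monoid_scheme \<Rightarrow> 'e set \<Rightarrow> ('e \<times> bool \<Rightarrow> 'v) \<Rightarrow> ('e \<times> bool \<Rightarrow> 'g) \<Rightarrow> 'v \<Rightarrow> 'g" where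
  "omega G E vx W \<mu> = finprod G W (halves_at E vx \<mu>)"

definition Hsub ::
  "('g, 'b) monoid_scheme \<Rightarrow> 'e set \<Rightarrow> ('e \<times> bool \<Rightarrow> 'v) \<Rightarrow> ('e \<times> bool \<Rightarrow> 'g) \<Rightarrow> 'v \<Rightarrow> 'g set" where
  "Hsub G E vx W \<mu> = generate G {omega G E vx W \<mu>}"

definition brauer_weighting ::
  "('g, 'b) monoid_scheme \<Rightarrow> 'v set \<Rightarrow> 'e set \<Rightarrow> ('e \<times> bool \<Rightarrow> 'v) \<Rightarrow> ('v \<Rightarrow> nat)
   \<Rightarrow> ('e \<times> bool \<Rightarrow> 'g) \<Rightarrow> bool" where
  "brauer_weighting G V E vx m W \<longleftrightarrow>
     successor_weighting G E W \<and>
     (\<forall>\<mu>\<in>V. group.ord G (omega G E vx W \<mu>) dvd m \<mu>)"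

definition sim_step ::
  "('g, 'b) monoid_scheme \<Rightarrow> 'e set \<Rightarrow> ('e \<times> bool \<Rightarrow> 'v) \<Rightarrow> ('e \<times> bool \<Rightarrow> 'e \<times> bool)
   \<Rightarrow> ('e \<times> bool \<Rightarrow> 'g) \<Rightarrow> 'v \<Rightarrow> ((('e \<times> bool) \<times> 'g set) \<times> (('e \<times> bool) \<times> 'g set)) set" where
  "sim_step G E vx sc W \<mu> =
     {((h, Hsub G E vx W \<mu> #>\<^bsub>G\<^esub> g),
       (sc h, Hsub G E vx W \<mu> #>\<^bsub>G\<^esub> (g \<otimes>\<^bsub>G\<^esub> W h))) | h g.
        h \<in> halves_at E vx \<mu> \<and> g \<in> carrier G}"

definition sim_rel ::
  "('g, 'b) monoid_scheme \<Rightarrow> 'e set \<Rightarrow> ('e \<times> bool \<Rightarrow> 'v) \<Rightarrow> ('e \<times> bool \<Rightarrow> 'e \<times> bool)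
   \<Rightarrow> ('e \<times> bool \<Rightarrow> 'g) \<Rightarrow> 'v \<Rightarrow> ((('e \<times> bool) \<times> 'g set) \<times> (('e \<times> bool) \<times> 'g set)) set" where
  "sim_rel G E vx sc W \<mu> = (sim_step G E vx sc W \<mu> \<union> (sim_step G E vx sc W \<mu>)\<inverse>)\<^sup>*"

definition sim_class ::
  "('g, 'b) monoid_scheme \<Rightarrow> 'e set \<Rightarrow> ('e \<times> bool \<Rightarrow> 'v) \<Rightarrow> ('e \<times> bool \<Rightarrow> 'e \<times> bool)
   \<Rightarrow> ('e \<times> bool \<Rightarrow> 'g) \<Rightarrow> 'v \<Rightarrow> 'e \<times> bool \<Rightarrow> 'g \<Rightarrow> (('e \<times> bool) \<times> 'g set) set" where
  "sim_class G E vx sc W \<mu> h g =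
     sim_rel G E vx sc W \<mu> `` {(h, Hsub G E vx W \<mu> #>\<^bsub>G\<^esub> g)}"

definition D_set ::
  "('g, 'b) monoid_scheme \<Rightarrow> 'e set \<Rightarrow> ('e \<times> bool \<Rightarrow> 'v) \<Rightarrow> ('e \<times> bool \<Rightarrow> 'e \<times> bool)
   \<Rightarrow> ('e \<times> bool \<Rightarrow> 'g) \<Rightarrow> 'v \<Rightarrow> (('e \<times> bool) \<times> 'g set) set set" where
  "D_set G E vx sc W \<mu> =
     {sim_class G E vx sc W \<mu> h g | h g. h \<in> halves_at E vx \<mu> \<and> g \<in> carrier G}"

definition cov_vertices ::
  "('g, 'b) monoid_scheme \<Rightarrow> 'v set \<Rightarrow> 'e set \<Rightarrow> ('e \<times> bool \<Rightarrow> 'v) \<Rightarrow> ('e \<times> bool \<Rightarrow> 'e \<times> bool)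
   \<Rightarrow> ('e \<times> bool \<Rightarrow> 'g) \<Rightarrow> ('v \<times> (('e \<times> bool) \<times> 'g set) set) set" where
  "cov_vertices G V E vx sc W = {(\<mu>, d). \<mu> \<in> V \<and> d \<in> D_set G E vx sc W \<mu>}"

definition cov_edges :: "('g, 'b) monoid_scheme \<Rightarrow> 'e set \<Rightarrow> ('e \<times> 'g) set" where
  "cov_edges G E = E \<times> carrier G"

definition cov_end ::
  "('g, 'b) monoid_scheme \<Rightarrow> 'e set \<Rightarrow> ('e \<times> bool \<Rightarrow> 'v) \<Rightarrow> ('e \<times> bool \<Rightarrow> 'e \<times> bool)
   \<Rightarrow> ('e \<times> bool \<Rightarrow> 'g) \<Rightarrow> 'e \<times> 'g \<Rightarrow> bool \<Rightarrow> 'v \<times> (('e \<times> bool) \<times> 'g set) set" where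
  "cov_end G E vx sc W ig b =
     (vx (fst ig, b), sim_class G E vx sc W (vx (fst ig, b)) (fst ig, b) (snd ig))"

definition cov_loopless ::
  "('g, 'b) monoid_scheme \<Rightarrow> 'e set \<Rightarrow> ('e \<times> bool \<Rightarrow> 'v) \<Rightarrow> ('e \<times> bool \<Rightarrow> 'e \<times> bool)
   \<Rightarrow> ('e \<times> bool \<Rightarrow> 'g) \<Rightarrow> bool" where
  "cov_loopless G E vx sc W \<longleftrightarrow>
     (\<forall>ig\<in>cov_edges G E. cov_end G E vx sc W ig False \<noteq> cov_end G E vx sc W ig True)"

end

theory Submission
  imports Defs
begin

(* A successor weighting of "coboundary" form
     W h = f h \<otimes> inv (f (sc h)),   f : occurrences \<rightarrow> G,
   behaves like a trivial twist of the cyclic orderings: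
   (1) in a commutative group its products \<omega>_\<mu> telescope to \<one>, because sc
       permutes the occurrences at \<mu>; hence H_\<mu> = {\<one>} and W is a Brauer
       weighting for every multiplicity function;
   (2) the class of (h, H_\<mu> g) determines the coset H_\<mu> (g \<otimes> f h), since
       this quantity is invariant under the generating steps of \<sim>.
   Consequently the two endpoints of a covering edge i_g are distinct as
   soon as f separates the two occurrences (i,False) and (i,True) of every
   edge.  The theorem follows with G = Z/2Z and f (i,b) = [b], the weighting
   that turns \<Delta>_W into the "bipartite double cover" of \<Delta>. *)

(* The successor map restricts to a permutation of the occurrences at each
   vertex; this is what makes coboundary products telescope. *)
lemma brauer_graph_sc_permutes_halves_at:
  assumes "brauer_graph V E vx sc m"
  shows "inj_on sc (halves_at E vx \<mu>)" and "sc ` halves_at E vx \<mu> = halves_at E vx \<mu>"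
proof -
  have bij: "bij_betw sc (halves E) (halves E)"
    and pres: "\<forall>h\<in>halves E. vx (sc h) = vx h"
    using assms by (auto simp: brauer_graph_def)
  have sub: "halves_at E vx \<mu> \<subseteq> halves E" by (auto simp: halves_at_def)
  show "inj_on sc (halves_at E vx \<mu>)"
    using bij sub unfolding bij_betw_def by (blast intro: inj_on_subset)
  show "sc ` halves_at E vx \<mu> = halves_at E vx \<mu>"
  proof
    show "sc ` halves_at E vx \<mu> \<subseteq> halves_at E vx \<mu>"
      using bij pres unfolding halves_at_def bij_betw_def by auto
    show "halves_at E vx \<mu> \<subseteq> sc ` halves_at E vx \<mu>"
    proof
      fix h assume h: "h \<in> halves_at E vx \<mu>"
      then have "h \<in> sc ` halves E" using bij unfolding bij_betw_def halves_at_def by auto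
      then obtain h' where "h' \<in> halves E" "h = sc h'" by auto
      then show "h \<in> sc ` halves_at E vx \<mu>" using h pres unfolding halves_at_def by auto
    qed
  qed
qed

lemma brauer_graph_sc_closed:
  assumes "brauer_graph V E vx sc m" and "h \<in> halves E"
  shows "sc h \<in> halves E"
  using assms by (auto simp: brauer_graph_def bij_betw_def)

(* The weighting W h = f h \<otimes> inv (f (sc h)) induced by a labelling f of
   the occurrences, the analogue of a coboundary in graph cohomology. *)
definition coboundary ::
  "('g, 'b) monoid_scheme \<Rightarrow> ('e \<times> bool \<Rightarrow> 'e \<times> bool) \<Rightarrow> ('e \<times> bool \<Rightarrow> 'g) \<Rightarrow> 'e \<times> bool \<Rightarrow> 'g" where
  "coboundary G sc f h = f h \<otimes>\<^bsub>G\<^esub> inv\<^bsub>G\<^esub> f (sc h)"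

lemma coboundary_carrier:
  assumes "group G" "brauer_graph V E vx sc m" "f \<in> halves E \<rightarrow> carrier G" "h \<in> halves E"
  shows "coboundary G sc f h \<in> carrier G"
  using assms brauer_graph_sc_closed[OF assms(2,4)]
  by (auto simp: coboundary_def intro: group.inv_closed monoid.m_closed group.is_monoid)

(* (1) In a commutative group the product of a coboundary around a vertex
   is trivial: \<omega>_\<mu> \<otimes> \<Prod> f(sc h) = \<Prod> f h = \<Prod> f(sc h). *)
lemma (in comm_group) omega_coboundary:
  assumes bg: "brauer_graph V E vx sc m" and f: "f \<in> halves E \<rightarrow> carrier G"
  shows "omega G E vx (coboundary G sc f) \<mu> = \<one>"
proof -
  let ?A = "halves_at E vx \<mu>"
  have A_sub: "?A \<subseteq> halves E" by (auto simp: halves_at_def)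
  have fA: "f \<in> ?A \<rightarrow> carrier G" using f A_sub by auto
  have fscA: "(\<lambda>h. f (sc h)) \<in> ?A \<rightarrow> carrier G"
    using f A_sub brauer_graph_sc_closed[OF bg] by auto
  have cA: "coboundary G sc f \<in> ?A \<rightarrow> carrier G"
    using coboundary_carrier[OF is_group bg f] A_sub by auto
  have reindex: "finprod G (\<lambda>h. f (sc h)) ?A = finprod G f ?A"
    using finprod_reindex[of f sc ?A] brauer_graph_sc_permutes_halves_at[OF bg] fA by simp
  have "omega G E vx (coboundary G sc f) \<mu> \<otimes> finprod G (\<lambda>h. f (sc h)) ?A
        = finprod G (\<lambda>h. coboundary G sc f h \<otimes> f (sc h)) ?A"
    unfolding omega_def using cA fscA by simp
  also have "\<dots> = finprod G f ?A"
    using fA fscA by (intro finprod_cong') (auto simp: coboundary_def m_assoc Pi_iff)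
  finally have "omega G E vx (coboundary G sc f) \<mu> \<otimes> finprod G f ?A = finprod G f ?A"
    using reindex by simp
  moreover have "omega G E vx (coboundary G sc f) \<mu> \<in> carrier G"
    unfolding omega_def using cA by simp
  ultimately show ?thesis using fA by simp
qed

lemma (in comm_group) Hsub_coboundary:
  assumes "brauer_graph V E vx sc m" "f \<in> halves E \<rightarrow> carrier G"
  shows "Hsub G E vx (coboundary G sc f) \<mu> = {\<one>}"
  using omega_coboundary[OF assms] generate_one by (simp add: Hsub_def)

lemma (in comm_group) brauer_weighting_coboundary:
  assumes bg: "brauer_graph V E vx sc m" and f: "f \<in> halves E \<rightarrow> carrier G"
  shows "brauer_weighting G V E vx m (coboundary G sc f)"
  unfolding brauer_weighting_def successor_weighting_def
  using coboundary_carrier[OF is_group bg f] omega_coboundary[OF bg f] by simp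

(* (2) The coset H_\<mu> (g \<otimes> f h) is an invariant of the class [h, H_\<mu> g]:
   a generating step replaces g by g \<otimes> f h \<otimes> inv (f (sc h)) and h by sc h. *)
lemma (in comm_group) sim_rel_coboundary_invariant:
  assumes bg: "brauer_graph V E vx sc m" and f: "f \<in> halves E \<rightarrow> carrier G"
    and xy: "(x, y) \<in> sim_rel G E vx sc (coboundary G sc f) \<mu>"
  shows "snd x #> f (fst x) = snd y #> f (fst y)"
proof -
  let ?H = "Hsub G E vx (coboundary G sc f) \<mu>"
  have "omega G E vx (coboundary G sc f) \<mu> \<in> carrier G"
    unfolding omega_def using coboundary_carrier[OF is_group bg f]
    by (intro finprod_closed) (auto simp: halves_at_def)
  then have H_sub: "?H \<subseteq> carrier G" by (simp add: Hsub_def generate_incl)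
  have step_inv: "snd a #> f (fst a) = snd b #> f (fst b)"
    if step: "(a, b) \<in> sim_step G E vx sc (coboundary G sc f) \<mu>" for a b
  proof -
    obtain h g where ab: "a = (h, ?H #> g)"
      "b = (sc h, ?H #> (g \<otimes> coboundary G sc f h))"
      and h: "h \<in> halves E" and g: "g \<in> carrier G"
      using step unfolding sim_step_def halves_at_def by blast
    have fh: "f h \<in> carrier G" and fsc: "f (sc h) \<in> carrier G"
      using f h brauer_graph_sc_closed[OF bg h] by auto
    have "snd b #> f (fst b) = ?H #> (g \<otimes> (f h \<otimes> inv f (sc h)) \<otimes> f (sc h))"
      using ab g fh fsc H_sub by (simp add: coboundary_def coset_mult_assoc)
    also have "\<dots> = ?H #> (g \<otimes> f h)" using g fh fsc by (simp add: m_assoc)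
    also have "\<dots> = snd a #> f (fst a)" using ab g fh H_sub by (simp add: coset_mult_assoc)
    finally show ?thesis by simp
  qed
  show ?thesis
    using xy unfolding sim_rel_def
  proof (induction rule: rtrancl_induct)
    case (step y z)
    from step.hyps(2) have "snd y #> f (fst y) = snd z #> f (fst z)"
      using step_inv[of y z] step_inv[of z y] by auto
    with step.IH show ?case by simp
  qed simp
qed

lemma (in comm_group) cov_loopless_coboundary:
  assumes bg: "brauer_graph V E vx sc m" and f: "f \<in> halves E \<rightarrow> carrier G"
    and separating: "\<And>i. i \<in> E \<Longrightarrow> f (i, False) \<noteq> f (i, True)"
  shows "cov_loopless G E vx sc (coboundary G sc f)"
  unfolding cov_loopless_def
proof
  fix ig assume "ig \<in> cov_edges G E"
  then obtain i g where ig: "ig = (i, g)" and i: "i \<in> E" and g: "g \<in> carrier G"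
    by (auto simp: cov_edges_def)
  let ?W = "coboundary G sc f" and ?\<mu> = "vx (i, True)"
  have fi: "f (i, b) \<in> carrier G" for b using f i by (auto simp: halves_def)
  have H: "Hsub G E vx ?W ?\<mu> = {\<one>}" by (rule Hsub_coboundary[OF bg f])
  show "cov_end G E vx sc ?W ig False \<noteq> cov_end G E vx sc ?W ig True"
  proof
    assume eq: "cov_end G E vx sc ?W ig False = cov_end G E vx sc ?W ig True"
    then have "vx (i, False) = ?\<mu>" by (simp add: ig cov_end_def)
    with eq have "sim_class G E vx sc ?W ?\<mu> (i, False) g = sim_class G E vx sc ?W ?\<mu> (i, True) g"
      by (simp add: ig cov_end_def)
    then have "(((i, False), {\<one>} #> g), ((i, True), {\<one>} #> g)) \<in> sim_rel G E vx sc ?W ?\<mu>"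
      by (auto simp: sim_class_def sim_rel_def H)
    from sim_rel_coboundary_invariant[OF bg f this]
    have "{\<one>} #> g #> f (i, False) = {\<one>} #> g #> f (i, True)" by simp
    then have "g \<otimes> f (i, False) = g \<otimes> f (i, True)"
      using g fi by (simp add: r_coset_def)
    then show False using separating[OF i] g fi by simp
  qed
qed

definition Z2 :: "nat monoid" where
  "Z2 = \<lparr>carrier = {0, 1}, monoid.mult = (\<lambda>x y. (x + y) mod 2), one = 0\<rparr>"

lemma Z2_comm_group: "comm_group Z2"
  by (rule comm_groupI) (auto simp: Z2_def mod_add_eq)

theorem proposition6p5:
  fixes V :: "'v set" and E :: "'e set"
    and vx :: "'e \<times> bool \<Rightarrow> 'v" and sc :: "'e \<times> bool \<Rightarrow> 'e \<times> bool"
    and m :: "'v \<Rightarrow> nat" and q :: "'e \<Rightarrow> 'v \<Rightarrow> 'k::field"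
  assumes "quantized_brauer_graph V E vx sc m q"
  shows "\<exists>(G :: nat monoid) (W :: 'e \<times> bool \<Rightarrow> nat).
           comm_group G \<and> finite (carrier G) \<and>
           brauer_weighting G V E vx m W \<and>
           cov_loopless G E vx sc W"
proof -
  have bg: "brauer_graph V E vx sc m"
    using assms by (simp add: quantized_brauer_graph_def)
  define f :: "'e \<times> bool \<Rightarrow> nat" where "f h = (if snd h then 1 else 0)" for h
  have f: "f \<in> halves E \<rightarrow> carrier Z2" by (simp add: f_def Z2_def)
  have separating: "f (i, False) \<noteq> f (i, True)" for i by (simp add: f_def)
  show ?thesis
  proof (intro exI conjI)
    show "comm_group Z2" by (fact Z2_comm_group)
    show "finite (carrier Z2)" by (simp add: Z2_def)
    show "brauer_weighting Z2 V E vx m (coboundary Z2 sc f)"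
      by (rule comm_group.brauer_weighting_coboundary[OF Z2_comm_group bg f])
    show "cov_loopless Z2 E vx sc (coboundary Z2 sc f)"
      by (rule comm_group.cov_loopless_coboundary[OF Z2_comm_group bg f separating])
  qed
qed

end
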